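(* Let $m\geq 2$, $d\ge1$, $s>0$, and let $j$ be a nonnegative integer. Let $\mathfrak{m}$ be a measurable function on $\mathbb{R}^{md}$ such that $|\mathfrak{m}(\xi)|\le C(1+|\xi|)^{-s}$ for all $\xi$ and $\mathrm{supp}(\mathfrak{m})\subset\mathbb{A}^{md}(2^j)$. For Schwartz functions $f_1,\dots,f_m$ on $\mathbb{R}^d$ and $\mathrm{F}=(f_1,\dots,f_m)$ define \[ T_{\mathfrak{m}}(\mathrm{F})(x)=\int_{\mathbb{R}^{md}} e^{2\pi i x\cdot(\xi_1+\cdots+\xi_m)}\,\mathfrak{m}(\xi)\prod_{i=1}^m\widehat{f_i}(\xi_i)\,\mathrm{d}\xi,\qquad x\in\mathbb{R}^d,\ \xi=(\xi_1,\dots,\xi_m). \] Then, with a constant $C'$ independent of $j$ and of the $f_i$, \[ \|T_{\mathfrak{m}}(\mathrm{F})\|_{L^2(\mathbb{R}^d)}\le C'\,2^{-j\left(s-\frac{(m-1)d}{2}\right)}\prod_{i=1}^m\|f_i\|_{L^2(\mathbb{R}^d)}. \]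
   Context: $\mathbb{A}^n(\lambda)=\{x\in\mathbb{R}^n:\lambda/2<|x|<2\lambda\}$ denotes the annulus in $\mathbb{R}^n$. *)

theory Defs
  imports "HOL-Analysis.Analysis"
begin

definition annulus :: "real \<Rightarrow> 'a::real_normed_vector set" where
  "annulus lam = {x. lam / 2 < norm x \<and> norm x < 2 * lam}"

definition dirderiv :: "('a::real_normed_vector \<Rightarrow> complex) \<Rightarrow> 'a \<Rightarrow> 'a \<Rightarrow> complex" where
  "dirderiv f v x = vector_derivative (\<lambda>t::real. f (x + t *\<^sub>R v)) (at 0)"

fun partials :: "'n list \<Rightarrow> (real^'n \<Rightarrow> complex) \<Rightarrow> real^'n \<Rightarrow> complex" where
  "partials [] f = f"
| "partials (i # is) f = dirderiv (partials is f) (axis i 1)"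

definition schwartz :: "(real^'n \<Rightarrow> complex) \<Rightarrow> bool" where
  "schwartz f \<longleftrightarrow>
     (\<forall>is x. partials is f differentiable (at x)) \<and>
     (\<forall>is (N::nat). \<exists>C. \<forall>x. (1 + norm x) ^ N * cmod (partials is f x) \<le> C)"

definition fourier :: "(real^'n \<Rightarrow> complex) \<Rightarrow> real^'n \<Rightarrow> complex" where
  "fourier f \<xi> = (\<integral>x. f x * exp (- (2 * pi * \<i> * complex_of_real (x \<bullet> \<xi>))) \<partial>lebesgue)"

definition l2norm :: "('a::euclidean_space \<Rightarrow> complex) \<Rightarrow> real" where
  "l2norm g = sqrt (\<integral>x. (cmod (g x))\<^sup>2 \<partial>lebesgue)"

text \<open>Multilinear multiplier operator; xi :: real^'n^'k is (xi_1,...,xi_m), m = CARD('k).\<close>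
definition multop :: "(real^'n^'k \<Rightarrow> complex) \<Rightarrow> ('k \<Rightarrow> real^'n \<Rightarrow> complex) \<Rightarrow> real^'n \<Rightarrow> complex" where
  "multop \<mm> F x = (\<integral>\<xi>. exp (2 * pi * \<i> * complex_of_real (x \<bullet> (\<Sum>i\<in>UNIV. \<xi> $ i)))
        * \<mm> \<xi> * (\<Prod>i\<in>UNIV. fourier (F i) (\<xi> $ i)) \<partial>lebesgue)"

end

(* Let T(x) = int exp(2 pi i x.S(xi)) psi(xi) dM(xi) for a measurable map S into R^n.
   Integrating |T|^2 against the Gaussian weight G_e(x) = exp(-pi e |x|^2), Fubini gives
     int G_e |T|^2 = int int psi(a) conj(psi(b)) K_e(S a - S b) dM(a) dM(b),
   where K_e, the Fourier transform of G_e, is a Gaussian probability density.  For psi = f m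
   the inequality |psi(a) psi(b)| <= (|f a|^2 |m b|^2 + |m a|^2 |f b|^2) / 2 and the symmetry of
   K_e bound the right-hand side by  sup_a int |m b|^2 K_e(S a - S b) dM(b)  times  int |f|^2,
   and monotone convergence (e -> 0) turns this into an L^2 bound for T.  With m = 1 and S = -id
   this is Plancherel's inequality.

   For the multilinear operator, S(xi) = xi_1 + ... + xi_m and f is the tensor product of the
   Fourier transforms of the f_i, so int |f|^2 <= prod ||f_i||^2 by Plancherel.  On the annulus the
   multiplier is bounded by |C| 2^(-(j-1)s) and supported in the ball of radius 2^(j+1); keeping the
   support condition only for the blocks xi_i with i <> i0 and integrating the block xi_i0 against
   K_e leaves the volume of m - 1 balls of radius 2^(j+1) in R^d, which is of order 2^(j(m-1)d). *)

theory Submission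
  imports Defs "HOL-Probability.Probability"
begin

section \<open>Lebesgue measure on vectors as a product measure\<close>

lemma borel_measurable_vec_lambda_PiM [measurable]:
  "(\<lambda>f. vec_lambda f :: 'a::euclidean_space ^ 'k) \<in> borel_measurable (Pi\<^sub>M UNIV (\<lambda>_. lborel))"
proof (subst borel_measurable_euclidean_space, intro ballI)
  fix b :: "'a ^ 'k" assume "b \<in> Basis"
  then obtain i u where "b = axis i u" by (auto simp: Basis_vec_def)
  then show "(\<lambda>f. vec_lambda f \<bullet> b) \<in> borel_measurable (Pi\<^sub>M UNIV (\<lambda>_. lborel))"
    by (simp add: inner_axis)
qed

lemma borel_measurable_vec_nth [measurable]:
  "(\<lambda>x::'a::euclidean_space ^ 'n. x $ i) \<in> borel_measurable borel"
  by (intro borel_measurable_continuous_onI linear_continuous_on bounded_linear_vec_nth)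

lemma lborel_vec_eq_distr_PiM:
  "(lborel :: ('a::euclidean_space ^ 'k) measure) = distr (Pi\<^sub>M UNIV (\<lambda>_. lborel)) borel vec_lambda"
proof (rule lborel_eqI)
  interpret product_sigma_finite "\<lambda>_::'k. lborel :: 'a measure" ..
  fix l u :: "'a ^ 'k" assume le: "\<And>b. b \<in> Basis \<Longrightarrow> l \<bullet> b \<le> u \<bullet> b"
  have le_nth: "l $ i \<bullet> b \<le> u $ i \<bullet> b" if "b \<in> Basis" for i b
    using le[of "axis i b"] that by (auto simp: Basis_vec_def inner_axis)
  have "vec_lambda -` box l u \<inter> space (Pi\<^sub>M UNIV (\<lambda>_. lborel)) = (\<Pi>\<^sub>E i\<in>UNIV. box (l $ i) (u $ i))"
    by (auto simp: box_def Basis_vec_def inner_axis space_PiM)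
  then have "emeasure (distr (Pi\<^sub>M UNIV (\<lambda>_. lborel)) borel vec_lambda) (box l u)
      = (\<Prod>i\<in>UNIV. emeasure lborel (box (l $ i) (u $ i)))"
    by (simp add: emeasure_distr emeasure_PiM)
  also have "\<dots> = ennreal (\<Prod>i\<in>UNIV. \<Prod>b\<in>Basis. (u $ i - l $ i) \<bullet> b)"
    using le_nth by (simp add: emeasure_lborel_box_eq inner_diff_left prod_ennreal prod_nonneg)
  also have "(\<Prod>i\<in>UNIV. \<Prod>b\<in>Basis. (u $ i - l $ i) \<bullet> b) = (\<Prod>b\<in>Basis. (u - l) \<bullet> b)"
  proof -
    have "(\<Prod>b\<in>Basis. (u - l) \<bullet> b) = (\<Prod>i\<in>UNIV. \<Prod>b\<in>axis i ` Basis. (u - l) \<bullet> b)"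
      unfolding Basis_vec_def
      by (subst prod.UNION_disjoint)
        (auto simp: axis_eq_axis Setcompr_eq_image[symmetric] UNION_singleton_eq_range intro!: prod.cong)
    also have "\<dots> = (\<Prod>i\<in>UNIV. \<Prod>b\<in>Basis. (u $ i - l $ i) \<bullet> b)"
      by (subst prod.reindex) (auto simp: inj_on_def axis_eq_axis inner_axis)
    finally show ?thesis ..
  qed
  finally show "emeasure (distr (Pi\<^sub>M UNIV (\<lambda>_. lborel)) borel vec_lambda) (box l u) = (\<Prod>b\<in>Basis. (u - l) \<bullet> b)" .
qed simp

lemma nn_integral_lborel_vec_prod:
  fixes f :: "'k::finite \<Rightarrow> 'a::euclidean_space \<Rightarrow> ennreal"
  assumes [measurable]: "\<And>i. f i \<in> borel_measurable borel"
  shows "(\<integral>\<^sup>+x. (\<Prod>i\<in>UNIV. f i (x $ i)) \<partial>lborel) = (\<Prod>i\<in>UNIV. \<integral>\<^sup>+t. f i t \<partial>lborel)"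
proof -
  interpret product_sigma_finite "\<lambda>_::'k. lborel :: 'a measure" ..
  show ?thesis
    by (subst lborel_vec_eq_distr_PiM) (simp add: nn_integral_distr product_nn_integral_prod[symmetric])
qed

lemma integral_lborel_vec_prod:
  fixes f :: "'k::finite \<Rightarrow> 'a::euclidean_space \<Rightarrow> 'b::{real_normed_field,banach,second_countable_topology}"
  assumes "\<And>i. integrable lborel (f i)"
  shows "(\<integral>x. (\<Prod>i\<in>UNIV. f i (x $ i)) \<partial>lborel) = (\<Prod>i\<in>UNIV. \<integral>t. f i t \<partial>lborel)"
proof -
  interpret product_sigma_finite "\<lambda>_::'k. lborel :: 'a measure" ..
  have [measurable]: "f i \<in> borel_measurable borel" for i
    using assms by (simp add: borel_measurable_integrable)
  show ?thesis
    by (subst lborel_vec_eq_distr_PiM) (simp add: integral_distr product_integral_prod[symmetric] assms)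
qed

lemma sigma_finite_measure_completion:
  assumes "sigma_finite_measure M"
  shows "sigma_finite_measure (completion M)"
proof
  obtain A where "countable A" "A \<subseteq> sets M" "\<Union>A = space M" "\<forall>a\<in>A. emeasure M a \<noteq> \<infinity>"
    using sigma_finite_measure.sigma_finite_countable[OF assms] by blast
  then show "\<exists>A. countable A \<and> A \<subseteq> sets (completion M) \<and> \<Union>A = space (completion M)
      \<and> (\<forall>a\<in>A. emeasure (completion M) a \<noteq> \<infinity>)"
    by (intro exI[of _ A]) auto
qed

lemma borel_measurable_cnj [measurable (raw)]:
  "f \<in> borel_measurable M \<Longrightarrow> (\<lambda>x. cnj (f x)) \<in> borel_measurable M"
  by (erule measurable_compose) (intro borel_measurable_continuous_onI linear_continuous_on bounded_linear_cnj)

lemma ennreal_integral_le_nn_integral: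
  fixes f :: "'a \<Rightarrow> real"
  assumes "\<And>x. f x \<ge> 0"
  shows "ennreal (integral\<^sup>L M f) \<le> (\<integral>\<^sup>+x. ennreal (f x) \<partial>M)"
proof (cases "integrable M f")
  case True
  then show ?thesis using assms by (simp add: nn_integral_eq_integral)
qed (simp add: not_integrable_integral_eq)

lemma (in pair_sigma_finite) integrable_mult_fst_snd:
  fixes f :: "'a \<Rightarrow> 'c::{real_normed_field, banach, second_countable_topology}" and g :: "'b \<Rightarrow> 'c"
  assumes f: "integrable M1 f" and g: "integrable M2 g"
  shows "integrable (M1 \<Otimes>\<^sub>M M2) (\<lambda>z. f (fst z) * g (snd z))"
proof (rule integrableI_bounded)
  have [measurable]: "f \<in> borel_measurable M1" "g \<in> borel_measurable M2"
    using f g by auto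
  show "(\<lambda>z. f (fst z) * g (snd z)) \<in> borel_measurable (M1 \<Otimes>\<^sub>M M2)"
    by measurable
  have "(\<integral>\<^sup>+z. ennreal (norm (f (fst z) * g (snd z))) \<partial>(M1 \<Otimes>\<^sub>M M2))
      = (\<integral>\<^sup>+x. ennreal (norm (f x)) \<partial>M1) * (\<integral>\<^sup>+y. ennreal (norm (g y)) \<partial>M2)"
    by (subst M2.nn_integral_fst[symmetric])
      (auto simp: norm_mult ennreal_mult nn_integral_cmult nn_integral_multc)
  also have "\<dots> < \<infinity>"
    using f g by (simp add: integrable_iff_bounded ennreal_mult_less_top)
  finally show "(\<integral>\<^sup>+z. ennreal (norm (f (fst z) * g (snd z))) \<partial>(M1 \<Otimes>\<^sub>M M2)) < \<infinity>" .
qed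

lemma (in pair_sigma_finite) integral_mult_fst_snd:
  fixes f :: "'a \<Rightarrow> 'c::{real_normed_field, banach, second_countable_topology}" and g :: "'b \<Rightarrow> 'c"
  assumes f: "integrable M1 f" and g: "integrable M2 g"
  shows "(\<integral>z. f (fst z) * g (snd z) \<partial>(M1 \<Otimes>\<^sub>M M2)) = (\<integral>x. f x \<partial>M1) * (\<integral>y. g y \<partial>M2)"
  using integral_fst'[OF integrable_mult_fst_snd[OF f g]] by simp

lemma (in sigma_finite_measure) cmod_integral_sq_eq_integral_pair:
  fixes f :: "'a \<Rightarrow> complex"
  assumes "integrable M f"
  shows "complex_of_real ((cmod (integral\<^sup>L M f))\<^sup>2) = (\<integral>z. f (fst z) * cnj (f (snd z)) \<partial>(M \<Otimes>\<^sub>M M))"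
proof -
  interpret pair_sigma_finite M M ..
  show ?thesis
    unfolding complex_norm_square integral_mult_fst_snd[OF assms integrable_cnj[OF assms]] by simp
qed

lemma ennreal_mult_le_half_sum_sq:
  fixes x y w :: real
  assumes "w \<ge> 0"
  shows "ennreal (x * y * w) \<le> (ennreal (x\<^sup>2 * w) + ennreal (y\<^sup>2 * w)) / 2"
proof -
  have "2 * x * y * w \<le> (x\<^sup>2 + y\<^sup>2) * w"
    using assms by (intro mult_right_mono sum_squares_bound)
  then have "ennreal (x * y * w) \<le> ennreal ((x\<^sup>2 * w + y\<^sup>2 * w) / 2)"
    by (intro ennreal_leI) (simp add: field_simps)
  then show ?thesis
    using assms by (simp flip: divide_ennreal ennreal_plus)
qed

lemma nn_integral_symmetric_kernel_le:
  fixes u v :: "'a \<Rightarrow> real" and W :: "'a \<Rightarrow> 'a \<Rightarrow> real"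
  assumes M: "sigma_finite_measure M"
    and [measurable]: "u \<in> borel_measurable M" "v \<in> borel_measurable M"
    and W [measurable]: "(\<lambda>z. W (fst z) (snd z)) \<in> borel_measurable (M \<Otimes>\<^sub>M M)"
    and nonneg: "\<And>a. u a \<ge> 0" "\<And>a. v a \<ge> 0" "\<And>a b. W a b \<ge> 0"
    and sym: "\<And>a b. W a b = W b a"
    and bound: "\<And>a. a \<in> space M \<Longrightarrow> (\<integral>\<^sup>+b. ennreal ((v b)\<^sup>2 * W a b) \<partial>M) \<le> A"
  shows "(\<integral>\<^sup>+z. ennreal (u (fst z) * v (fst z) * u (snd z) * v (snd z) * W (fst z) (snd z)) \<partial>(M \<Otimes>\<^sub>M M))
    \<le> A * (\<integral>\<^sup>+a. ennreal ((u a)\<^sup>2) \<partial>M)"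
proof -
  interpret M: sigma_finite_measure M by fact
  interpret MM: pair_sigma_finite M M ..
  define h where "h a b = ennreal ((u a)\<^sup>2 * ((v b)\<^sup>2 * W a b))" for a b
  have [measurable]: "(\<lambda>z. W (snd z) (fst z)) \<in> borel_measurable (M \<Otimes>\<^sub>M M)"
    by (subst sym) simp
  have [measurable]: "(\<lambda>z. h (fst z) (snd z)) \<in> borel_measurable (M \<Otimes>\<^sub>M M)"
    "(\<lambda>z. h (snd z) (fst z)) \<in> borel_measurable (M \<Otimes>\<^sub>M M)"
    unfolding h_def by measurable
  have [measurable]: "(\<lambda>b. W a b) \<in> borel_measurable M" if "a \<in> space M" for a
    using measurable_Pair2[OF W that] by simp
  have "ennreal (u a * v a * u b * v b * W a b) \<le> (h a b + h b a) / 2" for a b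
    using ennreal_mult_le_half_sum_sq[of "W a b" "u a * v b" "u b * v a"] nonneg
    by (simp add: h_def sym[of b a] power_mult_distrib mult_ac)
  then have "(\<integral>\<^sup>+z. ennreal (u (fst z) * v (fst z) * u (snd z) * v (snd z) * W (fst z) (snd z)) \<partial>(M \<Otimes>\<^sub>M M))
      \<le> ((\<integral>\<^sup>+z. h (fst z) (snd z) \<partial>(M \<Otimes>\<^sub>M M)) + (\<integral>\<^sup>+z. h (snd z) (fst z) \<partial>(M \<Otimes>\<^sub>M M))) / 2"
    by (subst nn_integral_add[symmetric], simp, simp, subst nn_integral_divide[symmetric], simp)
      (rule nn_integral_mono, simp)
  also have "(\<integral>\<^sup>+z. h (snd z) (fst z) \<partial>(M \<Otimes>\<^sub>M M)) = (\<integral>\<^sup>+z. h (fst z) (snd z) \<partial>(M \<Otimes>\<^sub>M M))"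
    by (subst MM.nn_integral_snd[symmetric], simp, subst M.nn_integral_fst[symmetric], simp_all)
  also have "(\<integral>\<^sup>+z. h (fst z) (snd z) \<partial>(M \<Otimes>\<^sub>M M)) = (\<integral>\<^sup>+a. ennreal ((u a)\<^sup>2) * (\<integral>\<^sup>+b. ennreal ((v b)\<^sup>2 * W a b) \<partial>M) \<partial>M)"
    by (subst M.nn_integral_fst[symmetric], simp)
      (auto intro!: nn_integral_cong simp: h_def ennreal_mult nn_integral_cmult nonneg)
  also have "\<dots> \<le> (\<integral>\<^sup>+a. ennreal ((u a)\<^sup>2) * A \<partial>M)"
    by (intro nn_integral_mono mult_left_mono bound) auto
  also have "\<dots> = A * (\<integral>\<^sup>+a. ennreal ((u a)\<^sup>2) \<partial>M)"
    by (simp add: nn_integral_cmult mult.commute)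
  also have "(X + X) / 2 = X" for X :: ennreal
    by (simp add: mult_2[symmetric] ennreal_mult_divide_eq mult.commute)
  finally show ?thesis
    by (simp add: add_mono divide_right_mono_ennreal)
qed

section \<open>Gaussians\<close>

definition gaussian :: "real \<Rightarrow> real \<Rightarrow> real"
  where "gaussian e t = exp (- pi * e * t\<^sup>2)"

definition gaussian_kernel :: "real \<Rightarrow> real \<Rightarrow> real"
  where "gaussian_kernel e a = exp (- pi * a\<^sup>2 / e) / sqrt e"

lemma borel_measurable_gaussian [measurable]: "gaussian e \<in> borel_measurable borel"
  unfolding gaussian_def by measurable

lemma borel_measurable_gaussian_kernel [measurable]: "gaussian_kernel e \<in> borel_measurable borel"
  unfolding gaussian_kernel_def by measurable

lemma gaussian_nonneg: "gaussian e t \<ge> 0"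
  by (simp add: gaussian_def)

lemma gaussian_kernel_nonneg: "e > 0 \<Longrightarrow> gaussian_kernel e a \<ge> 0"
  by (simp add: gaussian_kernel_def)

lemma gaussian_kernel_diff_eq_normal_density:
  "e > 0 \<Longrightarrow> gaussian_kernel e (a - t) = normal_density a (sqrt (e / (2 * pi))) t"
  by (simp add: gaussian_kernel_def normal_density_def real_sqrt_divide power2_commute field_simps)

lemma nn_integral_gaussian_kernel_diff:
  assumes "e > 0"
  shows "(\<integral>\<^sup>+t. ennreal (gaussian_kernel e (a - t)) \<partial>lborel) = 1"
proof -
  interpret prob_space "density lborel (normal_density a (sqrt (e / (2 * pi))))"
    using assms by (intro prob_space_normal_density) auto
  show ?thesis
    using emeasure_space_1 assms by (simp add: gaussian_kernel_diff_eq_normal_density emeasure_density)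
qed

lemma integrable_gaussian:
  assumes "e > 0"
  shows "integrable lborel (gaussian e)"
proof -
  have "gaussian e = (\<lambda>t. gaussian_kernel (1 / e) (0 - t) / sqrt e)"
    using assms by (simp add: fun_eq_iff gaussian_def gaussian_kernel_def real_sqrt_divide field_simps)
  moreover have "integrable lborel (\<lambda>t. gaussian_kernel (1 / e) (0 - t))"
    using nn_integral_gaussian_kernel_diff[of "1 / e" 0] gaussian_kernel_nonneg[of "1 / e"] assms
    by (intro integrableI_nonneg) auto
  ultimately show ?thesis
    by (simp only: integrable_divide_zero)
qed

lemma fourier_gaussian:
  assumes e: "e > 0"
  shows "(\<integral>t. complex_of_real (gaussian e t) * exp (\<i> * complex_of_real (2 * pi * b * t)) \<partial>lborel)
    = complex_of_real (gaussian_kernel e b)"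
proof -
  define c where "c = sqrt (2 * pi * e)"
  define u where "u = 2 * pi * b / c"
  have c: "c > 0" using e by (simp add: c_def)
  have std: "std_normal_density (c * t) = gaussian e t / sqrt (2 * pi)" for t
    using e by (simp add: std_normal_density_def gaussian_def c_def power_mult_distrib field_simps)
  have iexp: "iexp (u * (c * t)) = exp (\<i> * complex_of_real (2 * pi * b * t))" for t
    using c by (simp add: u_def mult_ac)
  define I where "I = (\<integral>t. complex_of_real (gaussian e t) * exp (\<i> * complex_of_real (2 * pi * b * t)) \<partial>lborel)"
  \<comment> \<open>the characteristic function of the standard normal distribution, rescaled by \<open>c\<close>\<close>
  have "complex_of_real (exp (- (u\<^sup>2) / 2)) = char std_normal_distribution u"
    by (simp add: char_std_normal_distribution)
  also have "\<dots> = (\<integral>x. std_normal_density x *\<^sub>R iexp (u * x) \<partial>lborel)"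
    unfolding char_def by (subst integral_density) auto
  also have "\<dots> = \<bar>c\<bar> *\<^sub>R (\<integral>t. std_normal_density (0 + c * t) *\<^sub>R iexp (u * (0 + c * t)) \<partial>lborel)"
    using c by (intro lborel_integral_real_affine) simp
  also have "\<dots> = complex_of_real (c / sqrt (2 * pi)) * I"
    using c by (simp only: std iexp add_0_left) (simp add: I_def scaleR_conv_of_real mult_ac)
  finally have eq: "complex_of_real (exp (- (u\<^sup>2) / 2)) = complex_of_real (c / sqrt (2 * pi)) * I" .
  have "c / sqrt (2 * pi) = sqrt e"
    using e by (simp add: c_def real_sqrt_mult)
  moreover have "- (u\<^sup>2) / 2 = - pi * b\<^sup>2 / e"
    using e c by (simp add: u_def c_def power_divide power_mult_distrib power2_eq_square field_simps)
  ultimately have "complex_of_real (sqrt e) * I = complex_of_real (exp (- pi * b\<^sup>2 / e))"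
    using eq by simp
  then have "I = complex_of_real (exp (- pi * b\<^sup>2 / e)) / complex_of_real (sqrt e)"
    using e by (simp add: field_simps)
  then show ?thesis
    unfolding I_def by (simp add: gaussian_kernel_def)
qed

definition gaussian_vec :: "real \<Rightarrow> real ^ 'n \<Rightarrow> real"
  where "gaussian_vec e x = (\<Prod>k\<in>UNIV. gaussian e (x $ k))"

definition gaussian_kernel_vec :: "real \<Rightarrow> real ^ 'n \<Rightarrow> real"
  where "gaussian_kernel_vec e a = (\<Prod>k\<in>UNIV. gaussian_kernel e (a $ k))"

lemma borel_measurable_gaussian_vec [measurable]: "gaussian_vec e \<in> borel_measurable borel"
  unfolding gaussian_vec_def by measurable

lemma borel_measurable_gaussian_kernel_vec [measurable]:
  "gaussian_kernel_vec e \<in> borel_measurable borel"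
  unfolding gaussian_kernel_vec_def by measurable

lemma gaussian_vec_nonneg: "gaussian_vec e x \<ge> 0"
  by (simp add: gaussian_vec_def gaussian_nonneg prod_nonneg)

lemma gaussian_kernel_vec_nonneg: "e > 0 \<Longrightarrow> gaussian_kernel_vec e a \<ge> 0"
  by (simp add: gaussian_kernel_vec_def gaussian_kernel_nonneg prod_nonneg)

lemma gaussian_kernel_vec_commute: "gaussian_kernel_vec e (a - b) = gaussian_kernel_vec e (b - a)"
  by (simp add: gaussian_kernel_vec_def gaussian_kernel_def power2_commute)

lemma integrable_gaussian_vec:
  assumes "e > 0"
  shows "integrable lborel (gaussian_vec e :: real ^ 'n \<Rightarrow> real)"
proof (rule integrableI_nonneg)
  have "(\<integral>\<^sup>+x. ennreal (gaussian_vec e (x :: real ^ 'n)) \<partial>lborel)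
      = (\<Prod>k\<in>(UNIV :: 'n set). \<integral>\<^sup>+t. ennreal (gaussian e t) \<partial>lborel)"
    using nn_integral_lborel_vec_prod[where f="\<lambda>(_::'n) (t::real). ennreal (gaussian e t)"]
    by (simp add: gaussian_vec_def gaussian_nonneg prod_ennreal)
  also have "\<dots> < \<infinity>"
    using integrable_gaussian[OF assms]
    by (simp add: integrable_iff_bounded gaussian_nonneg power_less_top_ennreal)
  finally show "(\<integral>\<^sup>+x. ennreal (gaussian_vec e (x :: real ^ 'n)) \<partial>lborel) < \<infinity>" .
qed (auto simp: gaussian_vec_nonneg)

lemma nn_integral_gaussian_kernel_vec_diff:
  assumes "e > 0"
  shows "(\<integral>\<^sup>+y. ennreal (gaussian_kernel_vec e (a - y)) \<partial>lborel) = 1"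
  using assms nn_integral_lborel_vec_prod[where f="\<lambda>k t. ennreal (gaussian_kernel e (a $ k - t))"]
  by (simp add: gaussian_kernel_vec_def gaussian_kernel_nonneg prod_ennreal nn_integral_gaussian_kernel_diff)

lemma fourier_gaussian_vec:
  fixes c :: "real ^ 'n"
  assumes e: "e > 0"
  shows "(\<integral>x. complex_of_real (gaussian_vec e x) * exp (2 * pi * \<i> * complex_of_real (x \<bullet> c)) \<partial>lborel)
    = complex_of_real (gaussian_kernel_vec e c)"
proof -
  define f where "f k t = complex_of_real (gaussian e t) * exp (\<i> * complex_of_real (2 * pi * (c $ k) * t))"
    for k t
  have "integrable lborel (f k)" for k
    unfolding f_def
    by (rule Bochner_Integration.integrable_bound[where f="\<lambda>t. complex_of_real (gaussian e t)"])
      (auto simp: norm_mult integrable_gaussian[OF e])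
  moreover have "complex_of_real (gaussian_vec e x) * exp (2 * pi * \<i> * complex_of_real (x \<bullet> c))
      = (\<Prod>k\<in>UNIV. f k (x $ k))" for x
    by (simp add: f_def gaussian_vec_def inner_vec_def sum_distrib_left exp_sum prod.distrib mult_ac)
  moreover have "integral\<^sup>L lborel (f k) = complex_of_real (gaussian_kernel e (c $ k))" for k
    unfolding f_def by (rule fourier_gaussian[OF e])
  ultimately show ?thesis
    by (simp add: integral_lborel_vec_prod gaussian_kernel_vec_def)
qed

lemma nn_integral_le_of_gaussian_weighted_le:
  fixes h :: "real ^ 'n \<Rightarrow> ennreal"
  assumes [measurable]: "h \<in> borel_measurable borel"
    and bound: "\<And>e. e > 0 \<Longrightarrow> (\<integral>\<^sup>+x. ennreal (gaussian_vec e x) * h x \<partial>lborel) \<le> B"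
  shows "(\<integral>\<^sup>+x. h x \<partial>lborel) \<le> B"
proof -
  define w where "w n x = ennreal (gaussian_vec (1 / Suc n) x)" for n and x :: "real ^ 'n"
  have inc: "incseq (\<lambda>n. w n x)" for x
    unfolding w_def gaussian_vec_def gaussian_def
    by (intro incseq_SucI ennreal_leI prod_mono) (auto simp: field_simps)
  have "(\<lambda>n. w n x) \<longlonglongrightarrow> ennreal (\<Prod>k\<in>UNIV. exp (- pi * 0 * (x $ k)\<^sup>2))" for x
    unfolding w_def gaussian_vec_def gaussian_def
    by (intro tendsto_intros LIMSEQ_inverse_real_of_nat[unfolded inverse_eq_divide])
  then have "(SUP n. w n x) = 1" for x
    using LIMSEQ_unique[OF LIMSEQ_SUP[OF inc]] by simp
  then have "(\<integral>\<^sup>+x. h x \<partial>lborel) = (\<integral>\<^sup>+x. (SUP n. w n x * h x) \<partial>lborel)"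
    by (simp add: SUP_mult_right_ennreal[symmetric])
  also have "\<dots> = (SUP n. \<integral>\<^sup>+x. w n x * h x \<partial>lborel)"
    using inc by (intro nn_integral_monotone_convergence_SUP)
      (auto simp: incseq_def le_fun_def w_def intro: mult_right_mono)
  also have "\<dots> \<le> B"
    unfolding w_def by (intro SUP_least bound) simp
  finally show ?thesis .
qed

section \<open>An \<open>L\<^sup>2\<close> bound for inverse Fourier transforms of image measures\<close>

definition inv_fourier_image :: "'e measure \<Rightarrow> ('e \<Rightarrow> real ^ 'n) \<Rightarrow> ('e \<Rightarrow> complex) \<Rightarrow> real ^ 'n \<Rightarrow> complex"
  where "inv_fourier_image M S \<psi> x = (\<integral>\<xi>. exp (2 * pi * \<i> * complex_of_real (x \<bullet> S \<xi>)) * \<psi> \<xi> \<partial>M)"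

lemma borel_measurable_inv_fourier_image [measurable]:
  assumes "sigma_finite_measure M" and [measurable]: "S \<in> borel_measurable M" "\<psi> \<in> borel_measurable M"
  shows "inv_fourier_image M S \<psi> \<in> borel_measurable borel"
  unfolding inv_fourier_image_def
  by (rule sigma_finite_measure.borel_measurable_lebesgue_integral[OF assms(1)]) (simp add: split_beta')

lemma cmod_inv_fourier_image_le: "cmod (inv_fourier_image M S \<psi> x) \<le> (\<integral>\<xi>. cmod (\<psi> \<xi>) \<partial>M)"
  unfolding inv_fourier_image_def
  using integral_norm_bound[of M "\<lambda>\<xi>. exp (2 * pi * \<i> * complex_of_real (x \<bullet> S \<xi>)) * \<psi> \<xi>"]
  by (simp add: norm_mult)

lemma integral_gaussian_vec_cmod_sq_inv_fourier_image:
  fixes S :: "'e \<Rightarrow> real ^ 'n"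
  assumes M: "sigma_finite_measure M" and \<psi>: "integrable M \<psi>" and [measurable]: "S \<in> borel_measurable M"
    and e: "e > 0"
  shows "complex_of_real (\<integral>x. gaussian_vec e x * (cmod (inv_fourier_image M S \<psi> x))\<^sup>2 \<partial>lborel)
    = (\<integral>z. \<psi> (fst z) * cnj (\<psi> (snd z)) * complex_of_real (gaussian_kernel_vec e (S (fst z) - S (snd z)))
        \<partial>(M \<Otimes>\<^sub>M M))"
proof -
  interpret M: sigma_finite_measure M by fact
  interpret MM: pair_sigma_finite M M ..
  interpret LMM: pair_sigma_finite lborel "M \<Otimes>\<^sub>M M" ..
  have [measurable]: "\<psi> \<in> borel_measurable M"
    using \<psi> by auto
  define ea where "ea x \<xi> = exp (2 * pi * \<i> * complex_of_real (x \<bullet> S \<xi>))" for x \<xi>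
  define \<Phi> where "\<Phi> x z = \<psi> (fst z) * cnj (\<psi> (snd z))
    * (complex_of_real (gaussian_vec e x) * exp (2 * pi * \<i> * complex_of_real (x \<bullet> (S (fst z) - S (snd z)))))"
    for x z
  have integrable_ea: "integrable M (\<lambda>\<xi>. ea x \<xi> * \<psi> \<xi>)" for x
    by (rule Bochner_Integration.integrable_bound[OF \<psi>]) (auto simp: ea_def norm_mult)
  have "integrable (lborel \<Otimes>\<^sub>M (M \<Otimes>\<^sub>M M))
      (\<lambda>p. complex_of_real (gaussian_vec e (fst p)) * (\<psi> (fst (snd p)) * cnj (\<psi> (snd (snd p)))))"
    using LMM.integrable_mult_fst_snd[OF integrable_of_real[OF integrable_gaussian_vec[OF e]]
        MM.integrable_mult_fst_snd[OF \<psi> integrable_cnj[OF \<psi>]]]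
    by simp
  then have integrable_\<Phi>: "integrable (lborel \<Otimes>\<^sub>M (M \<Otimes>\<^sub>M M)) (\<lambda>(x, z). \<Phi> x z)"
    by (rule Bochner_Integration.integrable_bound) (unfold \<Phi>_def, measurable, simp add: norm_mult split_beta')
  have \<Phi>_eq: "complex_of_real (gaussian_vec e x) * (ea x (fst z) * \<psi> (fst z) * cnj (ea x (snd z) * \<psi> (snd z)))
      = \<Phi> x z" for x z
    by (simp add: \<Phi>_def ea_def exp_cnj exp_add[symmetric] inner_diff_right algebra_simps)
  have "complex_of_real (gaussian_vec e x * (cmod (inv_fourier_image M S \<psi> x))\<^sup>2) = (\<integral>z. \<Phi> x z \<partial>(M \<Otimes>\<^sub>M M))"
    for x
  proof -
    have "complex_of_real (gaussian_vec e x * (cmod (inv_fourier_image M S \<psi> x))\<^sup>2)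
        = complex_of_real (gaussian_vec e x) * complex_of_real ((cmod (\<integral>\<xi>. ea x \<xi> * \<psi> \<xi> \<partial>M))\<^sup>2)"
      by (simp add: inv_fourier_image_def ea_def)
    then show ?thesis
      by (simp only: M.cmod_integral_sq_eq_integral_pair[OF integrable_ea] \<Phi>_eq flip: integral_mult_right_zero)
  qed
  then have "complex_of_real (\<integral>x. gaussian_vec e x * (cmod (inv_fourier_image M S \<psi> x))\<^sup>2 \<partial>lborel)
      = (\<integral>x. \<integral>z. \<Phi> x z \<partial>(M \<Otimes>\<^sub>M M) \<partial>lborel)"
    by (simp only: integral_complex_of_real[symmetric])
  also have "\<dots> = (\<integral>z. \<integral>x. \<Phi> x z \<partial>lborel \<partial>(M \<Otimes>\<^sub>M M))"
    using LMM.Fubini_integral[OF integrable_\<Phi>] by simp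
  finally show ?thesis
    by (simp only: \<Phi>_def integral_mult_right_zero fourier_gaussian_vec[OF e])
qed

lemma nn_integral_gaussian_vec_cmod_sq_inv_fourier_image_le:
  fixes S :: "'e \<Rightarrow> real ^ 'n"
  assumes M: "sigma_finite_measure M" and \<psi>: "integrable M \<psi>" and [measurable]: "S \<in> borel_measurable M"
    and e: "e > 0"
  shows "(\<integral>\<^sup>+x. ennreal (gaussian_vec e x) * ennreal ((cmod (inv_fourier_image M S \<psi> x))\<^sup>2) \<partial>lborel)
    \<le> (\<integral>\<^sup>+z. ennreal (cmod (\<psi> (fst z)) * cmod (\<psi> (snd z)) * gaussian_kernel_vec e (S (fst z) - S (snd z)))
        \<partial>(M \<Otimes>\<^sub>M M))"
proof -
  define T where "T = inv_fourier_image M S \<psi>"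
  have [measurable]: "\<psi> \<in> borel_measurable M" "T \<in> borel_measurable borel"
    unfolding T_def using M \<psi> by auto
  have "integrable lborel (\<lambda>x. gaussian_vec e x * (cmod (T x))\<^sup>2)"
  proof (rule Bochner_Integration.integrable_bound)
    show "integrable lborel (\<lambda>x :: real ^ 'n. (\<integral>\<xi>. cmod (\<psi> \<xi>) \<partial>M)\<^sup>2 * gaussian_vec e x)"
      by (intro integrable_mult_right integrable_gaussian_vec e)
    show "AE x in lborel. norm (gaussian_vec e x * (cmod (T x))\<^sup>2) \<le> norm ((\<integral>\<xi>. cmod (\<psi> \<xi>) \<partial>M)\<^sup>2 * gaussian_vec e x)"
      using cmod_inv_fourier_image_le[of M S \<psi>]
      by (auto simp: T_def gaussian_vec_nonneg abs_mult mult.commute intro!: mult_left_mono power_mono)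
  qed simp
  then have "(\<integral>\<^sup>+x. ennreal (gaussian_vec e x) * ennreal ((cmod (T x))\<^sup>2) \<partial>lborel)
      = ennreal (\<integral>x. gaussian_vec e x * (cmod (T x))\<^sup>2 \<partial>lborel)"
    by (simp add: nn_integral_eq_integral gaussian_vec_nonneg flip: ennreal_mult)
  also have "\<dots> \<le> ennreal (cmod (complex_of_real (\<integral>x. gaussian_vec e x * (cmod (T x))\<^sup>2 \<partial>lborel)))"
    by (intro ennreal_leI) simp
  also have "complex_of_real (\<integral>x. gaussian_vec e x * (cmod (T x))\<^sup>2 \<partial>lborel)
      = (\<integral>z. \<psi> (fst z) * cnj (\<psi> (snd z)) * complex_of_real (gaussian_kernel_vec e (S (fst z) - S (snd z)))
          \<partial>(M \<Otimes>\<^sub>M M))"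
    unfolding T_def using M \<psi> _ e by (rule integral_gaussian_vec_cmod_sq_inv_fourier_image) simp
  also have "ennreal (cmod \<dots>) \<le> (\<integral>\<^sup>+z. ennreal (cmod (\<psi> (fst z)) * cmod (\<psi> (snd z))
      * gaussian_kernel_vec e (S (fst z) - S (snd z))) \<partial>(M \<Otimes>\<^sub>M M))"
    by (intro ennreal_leI[THEN order_trans[OF _ ennreal_integral_le_nn_integral]] integral_norm_bound[THEN order_trans])
      (auto simp: norm_mult abs_of_nonneg gaussian_kernel_vec_nonneg[OF e])
  finally show ?thesis
    unfolding T_def .
qed

lemma nn_integral_cmod_sq_inv_fourier_image_le:
  fixes S :: "'e \<Rightarrow> real ^ 'n" and f m :: "'e \<Rightarrow> complex"
  assumes M: "sigma_finite_measure M"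
    and S [measurable]: "S \<in> borel_measurable M"
    and [measurable]: "f \<in> borel_measurable M" "m \<in> borel_measurable M"
    and integrable: "integrable M (\<lambda>\<xi>. f \<xi> * m \<xi>)"
    and kernel_bound: "\<And>e a. e > 0 \<Longrightarrow> a \<in> space M \<Longrightarrow>
      (\<integral>\<^sup>+b. ennreal ((cmod (m b))\<^sup>2 * gaussian_kernel_vec e (S a - S b)) \<partial>M) \<le> A"
  shows "(\<integral>\<^sup>+x. ennreal ((cmod (inv_fourier_image M S (\<lambda>\<xi>. f \<xi> * m \<xi>) x))\<^sup>2) \<partial>lborel)
    \<le> A * (\<integral>\<^sup>+\<xi>. ennreal ((cmod (f \<xi>))\<^sup>2) \<partial>M)"
proof (rule nn_integral_le_of_gaussian_weighted_le)
  show "(\<lambda>x. ennreal ((cmod (inv_fourier_image M S (\<lambda>\<xi>. f \<xi> * m \<xi>) x))\<^sup>2)) \<in> borel_measurable borel"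
    using M by measurable
  fix e :: real assume e: "e > 0"
  have "(\<integral>\<^sup>+x. ennreal (gaussian_vec e x) * ennreal ((cmod (inv_fourier_image M S (\<lambda>\<xi>. f \<xi> * m \<xi>) x))\<^sup>2) \<partial>lborel)
      \<le> (\<integral>\<^sup>+z. ennreal (cmod (f (fst z)) * cmod (m (fst z)) * cmod (f (snd z)) * cmod (m (snd z))
        * gaussian_kernel_vec e (S (fst z) - S (snd z))) \<partial>(M \<Otimes>\<^sub>M M))"
    using nn_integral_gaussian_vec_cmod_sq_inv_fourier_image_le[OF M integrable S e] by (simp add: norm_mult mult_ac)
  also have "\<dots> \<le> A * (\<integral>\<^sup>+\<xi>. ennreal ((cmod (f \<xi>))\<^sup>2) \<partial>M)"
    using M by (rule nn_integral_symmetric_kernel_le)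
      (auto intro: kernel_bound[OF e] gaussian_kernel_vec_commute gaussian_kernel_vec_nonneg[OF e])
  finally show "(\<integral>\<^sup>+x. ennreal (gaussian_vec e x) * ennreal ((cmod (inv_fourier_image M S (\<lambda>\<xi>. f \<xi> * m \<xi>) x))\<^sup>2) \<partial>lborel)
      \<le> A * (\<integral>\<^sup>+\<xi>. ennreal ((cmod (f \<xi>))\<^sup>2) \<partial>M)" .
qed

section \<open>Plancherel's inequality and Schwartz functions\<close>

lemma fourier_eq_inv_fourier_image:
  fixes f :: "real ^ 'n \<Rightarrow> complex"
  assumes [measurable]: "f \<in> borel_measurable borel"
  shows "fourier f = inv_fourier_image lborel uminus f"
proof
  fix \<xi> :: "real ^ 'n"
  have "fourier f \<xi> = (\<integral>x. f x * exp (- (2 * pi * \<i> * complex_of_real (x \<bullet> \<xi>))) \<partial>lborel)"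
    unfolding fourier_def by (rule integral_completion) measurable
  then show "fourier f \<xi> = inv_fourier_image lborel uminus f \<xi>"
    by (simp add: inv_fourier_image_def inner_commute mult.commute)
qed

lemma borel_measurable_fourier [measurable]:
  "f \<in> borel_measurable borel \<Longrightarrow> fourier f \<in> borel_measurable borel"
  by (simp add: fourier_eq_inv_fourier_image lborel.sigma_finite_measure_axioms)

lemma cmod_fourier_le:
  "f \<in> borel_measurable borel \<Longrightarrow> cmod (fourier f \<xi>) \<le> (\<integral>x. cmod (f x) \<partial>lborel)"
  by (simp add: fourier_eq_inv_fourier_image cmod_inv_fourier_image_le)

lemma plancherel_le:
  fixes f :: "real ^ 'n \<Rightarrow> complex"
  assumes [measurable]: "f \<in> borel_measurable borel" and "integrable lborel f"
  shows "(\<integral>\<^sup>+\<xi>. ennreal ((cmod (fourier f \<xi>))\<^sup>2) \<partial>lborel) \<le> (\<integral>\<^sup>+x. ennreal ((cmod (f x))\<^sup>2) \<partial>lborel)"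
proof -
  have "(\<integral>\<^sup>+\<xi>. ennreal ((cmod (inv_fourier_image lborel uminus (\<lambda>x. f x * 1) \<xi>))\<^sup>2) \<partial>lborel)
      \<le> 1 * (\<integral>\<^sup>+x. ennreal ((cmod (f x))\<^sup>2) \<partial>lborel)"
  proof (rule nn_integral_cmod_sq_inv_fourier_image_le)
    fix e :: real and a :: "real ^ 'n" assume "e > 0"
    then show "(\<integral>\<^sup>+b. ennreal ((cmod 1)\<^sup>2 * gaussian_kernel_vec e (- a - - b)) \<partial>lborel) \<le> 1"
      using nn_integral_gaussian_kernel_vec_diff[of e a] by (simp add: gaussian_kernel_vec_commute)
  qed (use assms in \<open>simp_all add: lborel.sigma_finite_measure_axioms\<close>)
  then show ?thesis
    by (simp add: fourier_eq_inv_fourier_image)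
qed

lemma integrable_prod_inverse_1_plus_square:
  "integrable lborel (\<lambda>x :: real ^ 'n. \<Prod>k\<in>UNIV. inverse (1 + (x $ k)\<^sup>2))"
proof (rule integrableI_nonneg)
  have "integrable lborel (\<lambda>t :: real. inverse (1 + t\<^sup>2))"
    using integrable_inverse_1_plus_square by (simp add: set_integrable_def einterval_def)
  then have "(\<integral>\<^sup>+t. ennreal (inverse (1 + t\<^sup>2)) \<partial>lborel) < \<infinity>"
    by (simp add: integrable_iff_bounded)
  moreover have "(\<integral>\<^sup>+x. ennreal (\<Prod>k\<in>UNIV. inverse (1 + ((x :: real ^ 'n) $ k)\<^sup>2)) \<partial>lborel)
      = (\<Prod>k\<in>(UNIV :: 'n set). \<integral>\<^sup>+t. ennreal (inverse (1 + t\<^sup>2)) \<partial>lborel)"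
    using nn_integral_lborel_vec_prod[where f="\<lambda>(_::'n) (t::real). ennreal (inverse (1 + t\<^sup>2))"]
    by (simp add: prod_ennreal)
  ultimately show "(\<integral>\<^sup>+x. ennreal (\<Prod>k\<in>UNIV. inverse (1 + ((x :: real ^ 'n) $ k)\<^sup>2)) \<partial>lborel) < \<infinity>"
    by (simp add: power_less_top_ennreal)
qed (auto intro!: AE_I2 prod_nonneg)

lemma prod_1_plus_square_le:
  "(\<Prod>k\<in>UNIV. 1 + (x $ k)\<^sup>2) \<le> (1 + norm x) ^ (2 * CARD('n))" for x :: "real ^ 'n"
proof -
  have "1 + (x $ k)\<^sup>2 \<le> (1 + norm x)\<^sup>2" for k
    using component_le_norm_cart[of x k] abs_le_square_iff[of "x $ k" "norm x"]
    by (simp add: power2_eq_square algebra_simps)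
  then have "(\<Prod>k\<in>UNIV. 1 + (x $ k)\<^sup>2) \<le> (\<Prod>k\<in>(UNIV :: 'n set). (1 + norm x)\<^sup>2)"
    by (intro prod_mono) (simp add: add_nonneg_nonneg)
  then show ?thesis
    by (simp add: power_mult)
qed

lemma schwartz_continuous: "schwartz f \<Longrightarrow> continuous_on UNIV f"
  unfolding schwartz_def
  by (metis continuous_at_imp_continuous_on differentiable_imp_continuous_within partials.simps(1))

lemma borel_measurable_schwartz: "schwartz f \<Longrightarrow> f \<in> borel_measurable borel"
  by (rule borel_measurable_continuous_onI) (rule schwartz_continuous)

lemma schwartz_decay: "schwartz f \<Longrightarrow> \<exists>C. \<forall>x. (1 + norm x) ^ N * cmod (f x) \<le> C"
  unfolding schwartz_def by (metis partials.simps(1))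

lemma integrable_schwartz:
  fixes f :: "real ^ 'n \<Rightarrow> complex"
  assumes f: "schwartz f"
  shows "integrable lborel f"
proof -
  obtain C where C: "\<And>x. (1 + norm x) ^ (2 * CARD('n)) * cmod (f x) \<le> C"
    using schwartz_decay[OF f] by blast
  have bound: "cmod (f x) \<le> C * (\<Prod>k\<in>UNIV. inverse (1 + (x $ k)\<^sup>2))" for x
  proof -
    have pos: "0 < (\<Prod>k\<in>(UNIV :: 'n set). 1 + (x $ k)\<^sup>2)"
      by (intro prod_pos) (simp add: add_pos_nonneg)
    have "cmod (f x) * (\<Prod>k\<in>UNIV. 1 + (x $ k)\<^sup>2) \<le> cmod (f x) * (1 + norm x) ^ (2 * CARD('n))"
      by (intro mult_left_mono prod_1_plus_square_le) simp
    also have "\<dots> \<le> C"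
      using C[of x] by (simp add: mult.commute)
    finally have "cmod (f x) \<le> C / (\<Prod>k\<in>UNIV. 1 + (x $ k)\<^sup>2)"
      using pos by (simp add: pos_le_divide_eq)
    then show ?thesis
      by (simp add: prod_inversef[unfolded comp_def] divide_inverse)
  qed
  show ?thesis
  proof (rule Bochner_Integration.integrable_bound)
    show "integrable lborel (\<lambda>x :: real ^ 'n. C * (\<Prod>k\<in>UNIV. inverse (1 + (x $ k)\<^sup>2)))"
      by (intro integrable_mult_right integrable_prod_inverse_1_plus_square)
    show "AE x in lborel. norm (f x) \<le> norm (C * (\<Prod>k\<in>UNIV. inverse (1 + (x $ k)\<^sup>2)))"
      by (intro AE_I2) (simp only: real_norm_def, rule order_trans[OF bound abs_ge_self])
  qed (use borel_measurable_schwartz[OF f] in simp)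
qed

lemma integrable_cmod_sq_schwartz:
  fixes f :: "real ^ 'n \<Rightarrow> complex"
  assumes f: "schwartz f"
  shows "integrable lborel (\<lambda>x. (cmod (f x))\<^sup>2)"
proof -
  obtain C where C: "\<And>x. (1 + norm x) ^ 0 * cmod (f x) \<le> C"
    using schwartz_decay[OF f] by blast
  have bound: "(cmod (f x))\<^sup>2 \<le> C * cmod (f x)" for x
    using C[of x] by (simp add: power2_eq_square mult_right_mono)
  show ?thesis
  proof (rule Bochner_Integration.integrable_bound)
    show "integrable lborel (\<lambda>x. C * cmod (f x))"
      by (intro integrable_mult_right integrable_norm integrable_schwartz f)
    show "AE x in lborel. norm ((cmod (f x))\<^sup>2) \<le> norm (C * cmod (f x))"
      by (intro AE_I2) (simp add: order_trans[OF bound abs_ge_self])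
  qed (use borel_measurable_schwartz[OF f] in measurable)
qed

lemma nn_integral_cmod_sq_eq_l2norm:
  fixes f :: "'a::euclidean_space \<Rightarrow> complex"
  assumes [measurable]: "f \<in> borel_measurable borel" and "integrable lborel (\<lambda>x. (cmod (f x))\<^sup>2)"
  shows "(\<integral>\<^sup>+x. ennreal ((cmod (f x))\<^sup>2) \<partial>lborel) = ennreal ((l2norm f)\<^sup>2)"
proof -
  have "(\<integral>x. (cmod (f x))\<^sup>2 \<partial>lebesgue) = (\<integral>x. (cmod (f x))\<^sup>2 \<partial>lborel)"
    by (rule integral_completion) measurable
  then show ?thesis
    using assms by (simp add: l2norm_def nn_integral_eq_integral)
qed

section \<open>The multilinear estimate\<close>

lemma nn_integral_indicator_prod_gaussian_kernel_vec:
  fixes B :: "(real ^ 'n) set" and a :: "real ^ 'n" and i0 :: "'k::finite"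
  assumes e: "e > 0" and [measurable]: "B \<in> sets borel"
  shows "(\<integral>\<^sup>+\<xi>. ennreal ((\<Prod>i\<in>UNIV - {i0}. indicator B (\<xi> $ i)) * gaussian_kernel_vec e (a - (\<Sum>i\<in>UNIV. \<xi> $ i)))
      \<partial>(lborel :: (real ^ 'n ^ 'k) measure))
    = emeasure lborel B ^ (CARD('k) - 1)"
proof -
  interpret product_sigma_finite "\<lambda>_::'k. lborel :: (real ^ 'n) measure" ..
  define I where "I = (UNIV :: 'k set) - {i0}"
  have UNIV_eq: "(UNIV :: 'k set) = insert i0 I" and i0: "i0 \<notin> I"
    by (auto simp: I_def)
  define g where "g f = ennreal ((\<Prod>i\<in>I. indicator B (f i)) * gaussian_kernel_vec e (a - (\<Sum>i\<in>UNIV. f i)))"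
    for f :: "'k \<Rightarrow> real ^ 'n"
  have [measurable]: "g \<in> borel_measurable (Pi\<^sub>M (insert i0 I) (\<lambda>_. lborel))"
    unfolding g_def UNIV_eq by measurable
  \<comment> \<open>integrating first over the coordinate \<open>i0\<close> removes the Gaussian kernel\<close>
  have g_i0: "(\<integral>\<^sup>+y. g (f(i0 := y)) \<partial>lborel) = (\<Prod>i\<in>I. indicator B (f i))" for f
  proof -
    have "(\<Sum>i\<in>I. (f(i0 := y)) i) = (\<Sum>i\<in>I. f i)" "(\<Prod>i\<in>I. indicator B ((f(i0 := y)) i)) = (\<Prod>i\<in>I. indicator B (f i) :: real)"
      for y
      using i0 by (auto intro!: sum.cong prod.cong)
    then have "g (f(i0 := y)) = ennreal (\<Prod>i\<in>I. indicator B (f i)) * ennreal (gaussian_kernel_vec e ((a - (\<Sum>i\<in>I. f i)) - y))"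
      for y
      using i0 unfolding g_def UNIV_eq
      by (subst ennreal_mult') (simp_all add: prod_nonneg algebra_simps)
    then show ?thesis
      using e by (simp add: nn_integral_cmult nn_integral_gaussian_kernel_vec_diff ennreal_indicator flip: prod_ennreal)
  qed
  have "(\<integral>\<^sup>+\<xi>. ennreal ((\<Prod>i\<in>UNIV - {i0}. indicator B (\<xi> $ i)) * gaussian_kernel_vec e (a - (\<Sum>i\<in>UNIV. \<xi> $ i)))
      \<partial>(lborel :: (real ^ 'n ^ 'k) measure)) = (\<integral>\<^sup>+f. g f \<partial>Pi\<^sub>M (insert i0 I) (\<lambda>_. lborel))"
    by (subst lborel_vec_eq_distr_PiM) (simp add: nn_integral_distr g_def[abs_def] I_def)
  also have "\<dots> = (\<integral>\<^sup>+f. (\<Prod>i\<in>I. indicator B (f i)) \<partial>Pi\<^sub>M I (\<lambda>_. lborel))"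
    by (simp add: product_nn_integral_insert i0 g_i0)
  also have "\<dots> = emeasure lborel B ^ card I"
    using product_nn_integral_prod[where f="\<lambda>_. indicator B" and I=I] by simp
  finally show ?thesis
    by (simp add: I_def card_Diff_singleton)
qed

lemma nn_integral_cmod_sq_prod_fourier_le:
  fixes F :: "'k::finite \<Rightarrow> real ^ 'n \<Rightarrow> complex"
  assumes [measurable]: "\<And>i. F i \<in> borel_measurable borel" and "\<And>i. integrable lborel (F i)"
  shows "(\<integral>\<^sup>+\<xi>. ennreal ((cmod (\<Prod>i\<in>UNIV. fourier (F i) (\<xi> $ i)))\<^sup>2) \<partial>lborel)
    \<le> (\<Prod>i\<in>UNIV. \<integral>\<^sup>+x. ennreal ((cmod (F i x))\<^sup>2) \<partial>lborel)"
proof -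
  have "(\<integral>\<^sup>+\<xi>. ennreal ((cmod (\<Prod>i\<in>UNIV. fourier (F i) (\<xi> $ i)))\<^sup>2) \<partial>lborel)
      = (\<Prod>i\<in>UNIV. \<integral>\<^sup>+\<xi>. ennreal ((cmod (fourier (F i) \<xi>))\<^sup>2) \<partial>lborel)"
    using nn_integral_lborel_vec_prod[where f="\<lambda>i \<xi>. ennreal ((cmod (fourier (F i) \<xi>))\<^sup>2)"]
    by (simp add: prod_norm[symmetric] prod_power_distrib prod_ennreal)
  also have "\<dots> \<le> (\<Prod>i\<in>UNIV. \<integral>\<^sup>+x. ennreal ((cmod (F i x))\<^sup>2) \<partial>lborel)"
    by (intro prod_mono_ennreal plancherel_le assms)
  finally show ?thesis .
qed

lemma multop_eq_inv_fourier_image: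
  "multop m F = inv_fourier_image lebesgue (\<lambda>\<xi>. \<Sum>i\<in>UNIV. \<xi> $ i) (\<lambda>\<xi>. (\<Prod>i\<in>UNIV. fourier (F i) (\<xi> $ i)) * m \<xi>)"
  by (simp add: fun_eq_iff multop_def inv_fourier_image_def mult_ac)

lemma integrable_prod_fourier_mult:
  fixes m :: "real ^ 'n ^ 'k \<Rightarrow> complex" and F :: "'k \<Rightarrow> real ^ 'n \<Rightarrow> complex"
  assumes [measurable]: "m \<in> borel_measurable lebesgue"
    and m_bound: "\<And>\<xi>. cmod (m \<xi>) \<le> B"
    and m_support: "\<And>\<xi>. m \<xi> \<noteq> 0 \<Longrightarrow> norm \<xi> < R"
    and [measurable]: "\<And>i. F i \<in> borel_measurable borel"
  shows "integrable lebesgue (\<lambda>\<xi>. (\<Prod>i\<in>UNIV. fourier (F i) (\<xi> $ i)) * m \<xi>)"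
proof -
  define M where "M = (\<Prod>i\<in>UNIV. \<integral>x. cmod (F i x) \<partial>lborel)"
  have [measurable]: "(\<lambda>\<xi> :: real ^ 'n ^ 'k. \<Prod>i\<in>UNIV. fourier (F i) (\<xi> $ i)) \<in> borel_measurable lebesgue"
    by (rule measurable_completion) measurable
  have "B \<ge> 0"
    using m_bound[of 0] norm_ge_zero order_trans by blast
  then have m_ball: "cmod (m \<xi>) \<le> B * indicator (ball 0 R) \<xi>" for \<xi>
    using m_bound[of \<xi>] m_support[of \<xi>] by (cases "m \<xi> = 0") auto
  have "cmod (\<Prod>i\<in>UNIV. fourier (F i) (\<xi> $ i)) \<le> M" for \<xi>
    unfolding M_def prod_norm[symmetric] by (intro prod_mono conjI cmod_fourier_le) auto
  then have bound: "norm ((\<Prod>i\<in>UNIV. fourier (F i) (\<xi> $ i)) * m \<xi>) \<le> M * B * indicator (ball 0 R) \<xi>" for \<xi>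
    unfolding norm_mult mult.assoc using m_ball by (rule mult_mono) (auto simp: M_def intro: prod_nonneg)
  show ?thesis
  proof (rule Bochner_Integration.integrable_bound)
    show "integrable lebesgue (\<lambda>\<xi> :: real ^ 'n ^ 'k. M * B * indicator (ball 0 R) \<xi>)"
      using emeasure_bounded_finite[of "ball (0 :: real ^ 'n ^ 'k) R"]
      by (intro integrable_mult_right integrable_real_indicator) auto
    show "AE \<xi> in lebesgue. norm ((\<Prod>i\<in>UNIV. fourier (F i) (\<xi> $ i)) * m \<xi>)
        \<le> norm (M * B * indicator (ball 0 R) \<xi>)"
      by (intro AE_I2) (simp only: real_norm_def, rule order_trans[OF bound abs_ge_self])
  qed measurable
qed

lemma nn_integral_multiplier_sq_gaussian_kernel_le:
  fixes m :: "real ^ 'n ^ 'k \<Rightarrow> complex" and a :: "real ^ 'n"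
  assumes [measurable]: "m \<in> borel_measurable lebesgue"
    and m_bound: "\<And>\<xi>. cmod (m \<xi>) \<le> B"
    and m_support: "\<And>\<xi>. m \<xi> \<noteq> 0 \<Longrightarrow> norm \<xi> < R"
    and e: "e > 0"
  shows "(\<integral>\<^sup>+\<xi>. ennreal ((cmod (m \<xi>))\<^sup>2 * gaussian_kernel_vec e (a - (\<Sum>i\<in>UNIV. \<xi> $ i))) \<partial>lebesgue)
    \<le> ennreal (B\<^sup>2) * emeasure lborel (ball (0 :: real ^ 'n) R) ^ (CARD('k) - 1)"
proof -
  obtain i0 :: 'k where True by blast
  define w where "w \<xi> = (\<Prod>i\<in>UNIV - {i0}. indicator (ball 0 R) (\<xi> $ i)) * gaussian_kernel_vec e (a - (\<Sum>i\<in>UNIV. \<xi> $ i))"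
    for \<xi> :: "real ^ 'n ^ 'k"
  have [measurable]: "ball (0 :: real ^ 'n) R \<in> sets borel"
    by simp
  have [measurable]: "w \<in> borel_measurable borel"
    unfolding w_def by measurable
  \<comment> \<open>the block \<open>\<xi> $ i0\<close> is left unconstrained, so that the Gaussian kernel can absorb its integral\<close>
  have "(cmod (m \<xi>))\<^sup>2 \<le> B\<^sup>2 * (\<Prod>i\<in>UNIV - {i0}. indicator (ball 0 R) (\<xi> $ i))" for \<xi>
  proof (cases "m \<xi> = 0")
    case False
    then have "\<xi> $ i \<in> ball 0 R" for i
      using m_support[of \<xi>] Finite_Cartesian_Product.norm_nth_le[of \<xi> i] by simp
    then show ?thesis
      using m_bound[of \<xi>] by (simp add: power_mono)
  qed (simp add: prod_nonneg)
  then have "ennreal ((cmod (m \<xi>))\<^sup>2 * gaussian_kernel_vec e (a - (\<Sum>i\<in>UNIV. \<xi> $ i))) \<le> ennreal (B\<^sup>2) * ennreal (w \<xi>)"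
    for \<xi>
    unfolding ennreal_mult'[OF zero_le_power2, symmetric] w_def mult.assoc[symmetric]
    using gaussian_kernel_vec_nonneg[OF e] by (intro ennreal_leI mult_right_mono)
  then have "(\<integral>\<^sup>+\<xi>. ennreal ((cmod (m \<xi>))\<^sup>2 * gaussian_kernel_vec e (a - (\<Sum>i\<in>UNIV. \<xi> $ i))) \<partial>lebesgue)
      \<le> ennreal (B\<^sup>2) * (\<integral>\<^sup>+\<xi>. ennreal (w \<xi>) \<partial>lborel)"
    by (simp add: nn_integral_mono nn_integral_completion flip: nn_integral_cmult)
  also have "(\<integral>\<^sup>+\<xi>. ennreal (w \<xi>) \<partial>lborel) = emeasure lborel (ball (0 :: real ^ 'n) R) ^ (CARD('k) - 1)"
    unfolding w_def using e by (rule nn_integral_indicator_prod_gaussian_kernel_vec) simp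
  finally show ?thesis .
qed

lemma nn_integral_cmod_sq_multop_le:
  fixes m :: "real ^ 'n ^ 'k \<Rightarrow> complex" and F :: "'k \<Rightarrow> real ^ 'n \<Rightarrow> complex"
  assumes m: "m \<in> borel_measurable lebesgue" "\<And>\<xi>. cmod (m \<xi>) \<le> B" "\<And>\<xi>. m \<xi> \<noteq> 0 \<Longrightarrow> norm \<xi> < R"
    and F_measurable [measurable]: "\<And>i. F i \<in> borel_measurable borel"
    and F_integrable: "\<And>i. integrable lborel (F i)"
  shows "(\<integral>\<^sup>+x. ennreal ((cmod (multop m F x))\<^sup>2) \<partial>lebesgue)
    \<le> ennreal (B\<^sup>2) * emeasure lborel (ball (0 :: real ^ 'n) R) ^ (CARD('k) - 1)
      * (\<Prod>i\<in>UNIV. \<integral>\<^sup>+x. ennreal ((cmod (F i x))\<^sup>2) \<partial>lborel)"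
proof -
  define S where "S \<xi> = (\<Sum>i\<in>UNIV. \<xi> $ i)" for \<xi> :: "real ^ 'n ^ 'k"
  define P where "P \<xi> = (\<Prod>i\<in>UNIV. fourier (F i) (\<xi> $ i))" for \<xi> :: "real ^ 'n ^ 'k"
  have [measurable]: "m \<in> borel_measurable lebesgue" "S \<in> borel_measurable lebesgue" "P \<in> borel_measurable lebesgue"
    unfolding S_def P_def using m(1) by (simp_all add: measurable_completion)
  have lebesgue: "sigma_finite_measure (lebesgue :: (real ^ 'n ^ 'k) measure)"
    using lborel.sigma_finite_measure_axioms by (rule sigma_finite_measure_completion)
  have integrable: "integrable lebesgue (\<lambda>\<xi>. P \<xi> * m \<xi>)"
    unfolding P_def using m F_measurable by (rule integrable_prod_fourier_mult)
  have kernel_bound: "(\<integral>\<^sup>+b. ennreal ((cmod (m b))\<^sup>2 * gaussian_kernel_vec e (S a - S b)) \<partial>lebesgue)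
      \<le> ennreal (B\<^sup>2) * emeasure lborel (ball (0 :: real ^ 'n) R) ^ (CARD('k) - 1)" if "e > 0" for e a
    unfolding S_def using m that by (rule nn_integral_multiplier_sq_gaussian_kernel_le)
  have "(\<integral>\<^sup>+x. ennreal ((cmod (multop m F x))\<^sup>2) \<partial>lebesgue)
      = (\<integral>\<^sup>+x. ennreal ((cmod (inv_fourier_image lebesgue S (\<lambda>\<xi>. P \<xi> * m \<xi>) x))\<^sup>2) \<partial>lborel)"
    using lebesgue
    by (simp add: multop_eq_inv_fourier_image S_def[abs_def] P_def[abs_def] nn_integral_completion)
  also have "\<dots> \<le> ennreal (B\<^sup>2) * emeasure lborel (ball (0 :: real ^ 'n) R) ^ (CARD('k) - 1)
      * (\<integral>\<^sup>+\<xi>. ennreal ((cmod (P \<xi>))\<^sup>2) \<partial>lebesgue)"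
    using lebesgue _ _ _ integrable kernel_bound by (rule nn_integral_cmod_sq_inv_fourier_image_le) simp_all
  also have "(\<integral>\<^sup>+\<xi>. ennreal ((cmod (P \<xi>))\<^sup>2) \<partial>lebesgue) \<le> (\<Prod>i\<in>UNIV. \<integral>\<^sup>+x. ennreal ((cmod (F i x))\<^sup>2) \<partial>lborel)"
    unfolding P_def by (simp add: nn_integral_completion nn_integral_cmod_sq_prod_fourier_le F_integrable)
  finally show ?thesis
    by (simp add: mult_left_mono)
qed

lemma multiplier_bounds_of_annulus:
  fixes m :: "'a::real_normed_vector \<Rightarrow> complex"
  assumes decay: "\<And>\<xi>. cmod (m \<xi>) \<le> C * (1 + norm \<xi>) powr (- s)" and "s \<ge> 0"
    and support: "closure {\<xi>. m \<xi> \<noteq> 0} \<subseteq> annulus lam"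
  shows "cmod (m \<xi>) \<le> \<bar>C\<bar> * (lam / 2) powr (- s)"
    and "m \<xi> \<noteq> 0 \<Longrightarrow> norm \<xi> < 2 * lam"
proof -
  have "\<xi> \<in> annulus lam" if "m \<xi> \<noteq> 0"
    by (rule subsetD[OF support subsetD[OF closure_subset]]) (simp add: that)
  then have annulus: "lam / 2 < norm \<xi> \<and> norm \<xi> < 2 * lam" if "m \<xi> \<noteq> 0"
    using that by (simp add: annulus_def)
  then show "m \<xi> \<noteq> 0 \<Longrightarrow> norm \<xi> < 2 * lam"
    by blast
  show "cmod (m \<xi>) \<le> \<bar>C\<bar> * (lam / 2) powr (- s)"
  proof (cases "m \<xi> = 0")
    case False
    then have "0 < lam / 2" "lam / 2 \<le> 1 + norm \<xi>"
      using annulus by auto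
    have "cmod (m \<xi>) \<le> \<bar>C\<bar> * (1 + norm \<xi>) powr (- s)"
      by (rule order_trans[OF decay]) (simp add: mult_right_mono)
    also have "\<dots> \<le> \<bar>C\<bar> * (lam / 2) powr (- s)"
      using \<open>s \<ge> 0\<close> \<open>0 < lam / 2\<close> \<open>lam / 2 \<le> 1 + norm \<xi>\<close> by (intro mult_left_mono powr_mono2') auto
    finally show ?thesis .
  qed simp
qed

lemma dyadic_scaling_identity:
  fixes C s u :: real and j N K :: nat
  assumes "u \<ge> 0" and "K \<ge> 1"
  shows "(\<bar>C\<bar> * (2 ^ j / 2) powr (- s))\<^sup>2 * (u * (2 * 2 ^ j) ^ N) ^ (K - 1)
    = (\<bar>C\<bar> * 2 powr s * sqrt ((u * 2 ^ N) ^ (K - 1)) * 2 powr (- real j * (s - (real K - 1) * real N / 2)))\<^sup>2"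
proof -
  define D where "D = real N * (real K - 1)"
  have pow2: "(2::real) ^ n = 2 powr real n" for n
    by (simp add: powr_realpow)
  have sq: "(2 powr x :: real)\<^sup>2 = 2 powr (2 * x)" for x
    by (simp add: power2_eq_square flip: powr_add)
  have "(2 ^ j / 2 :: real) = 2 powr (real j - 1)"
    by (simp add: pow2 powr_diff)
  then have X: "((2 ^ j / 2 :: real) powr (- s))\<^sup>2 = 2 powr (2 * ((real j - 1) * (- s)))"
    by (simp add: powr_powr sq)
  have real_D: "real N * real (K - 1) = D"
    using assms by (simp add: D_def of_nat_diff)
  have "(u * (2 * 2 ^ j) ^ N) ^ (K - 1) = u ^ (K - 1) * 2 ^ (Suc j * (N * (K - 1)))"
    by (simp only: power_mult_distrib power_Suc[symmetric] power_mult)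
  then have Y: "(u * (2 * 2 ^ j) ^ N) ^ (K - 1) = u ^ (K - 1) * 2 powr ((real j + 1) * D)"
    by (simp only: pow2 of_nat_mult real_D of_nat_Suc add.commute)
  have "(sqrt ((u * 2 ^ N) ^ (K - 1)))\<^sup>2 = u ^ (K - 1) * 2 ^ (N * (K - 1))"
    using assms by (simp add: power_mult_distrib power_mult)
  then have Z: "(sqrt ((u * 2 ^ N) ^ (K - 1)))\<^sup>2 = u ^ (K - 1) * 2 powr D"
    by (simp only: pow2 of_nat_mult real_D)
  have split: "(a * b)\<^sup>2 = a\<^sup>2 * b\<^sup>2" "(a * b * c * d)\<^sup>2 = a\<^sup>2 * b\<^sup>2 * c\<^sup>2 * d\<^sup>2" for a b c d :: real
    by (simp_all add: power_mult_distrib)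
  have "(\<bar>C\<bar> * (2 ^ j / 2) powr (- s))\<^sup>2 * (u * (2 * 2 ^ j) ^ N) ^ (K - 1)
      = C\<^sup>2 * u ^ (K - 1) * 2 powr (2 * ((real j - 1) * (- s)) + (real j + 1) * D)"
    unfolding split power2_abs X Y powr_add by (simp only: mult_ac)
  also have "2 * ((real j - 1) * (- s)) + (real j + 1) * D = 2 * s + D + 2 * (- real j * (s - D / 2))"
    by (simp add: algebra_simps)
  also have "C\<^sup>2 * u ^ (K - 1) * 2 powr (2 * s + D + 2 * (- real j * (s - D / 2)))
      = (\<bar>C\<bar> * 2 powr s * sqrt ((u * 2 ^ N) ^ (K - 1)) * 2 powr (- real j * (s - (real K - 1) * real N / 2)))\<^sup>2"
    unfolding split power2_abs Z sq powr_add by (simp only: mult_ac D_def)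
  finally show ?thesis .
qed

lemma nn_integral_cmod_sq_multop_schwartz_le:
  fixes m :: "real ^ 'n ^ 'k \<Rightarrow> complex" and F :: "'k \<Rightarrow> real ^ 'n \<Rightarrow> complex"
  assumes m: "m \<in> borel_measurable lebesgue" "\<And>\<xi>. cmod (m \<xi>) \<le> B" "\<And>\<xi>. m \<xi> \<noteq> 0 \<Longrightarrow> norm \<xi> < R"
    and F: "\<And>i. schwartz (F i)" and "R \<ge> 0"
  shows "(\<integral>\<^sup>+x. ennreal ((cmod (multop m F x))\<^sup>2) \<partial>lebesgue)
    \<le> ennreal (B\<^sup>2 * (unit_ball_vol (real CARD('n)) * R ^ CARD('n)) ^ (CARD('k) - 1) * (\<Prod>i\<in>UNIV. l2norm (F i))\<^sup>2)"
proof -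
  define V where "V = (unit_ball_vol (real CARD('n)) * R ^ CARD('n)) ^ (CARD('k) - 1)"
  have V: "V \<ge> 0"
    using \<open>R \<ge> 0\<close> by (simp add: V_def)
  have "(\<integral>\<^sup>+x. ennreal ((cmod (multop m F x))\<^sup>2) \<partial>lebesgue)
      \<le> ennreal (B\<^sup>2) * emeasure lborel (ball (0 :: real ^ 'n) R) ^ (CARD('k) - 1)
        * (\<Prod>i\<in>UNIV. \<integral>\<^sup>+x. ennreal ((cmod (F i x))\<^sup>2) \<partial>lborel)"
    using F by (intro nn_integral_cmod_sq_multop_le m borel_measurable_schwartz integrable_schwartz)
  also have "emeasure lborel (ball (0 :: real ^ 'n) R) ^ (CARD('k) - 1) = ennreal V"
    using \<open>R \<ge> 0\<close> by (simp add: V_def emeasure_ball ennreal_power)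
  also have "(\<Prod>i\<in>UNIV. \<integral>\<^sup>+x. ennreal ((cmod (F i x))\<^sup>2) \<partial>lborel) = ennreal ((\<Prod>i\<in>UNIV. l2norm (F i))\<^sup>2)"
    using F by (simp add: nn_integral_cmod_sq_eq_l2norm borel_measurable_schwartz integrable_cmod_sq_schwartz
        prod_ennreal prod_power_distrib)
  also have "ennreal (B\<^sup>2) * ennreal V * ennreal ((\<Prod>i\<in>UNIV. l2norm (F i))\<^sup>2)
      = ennreal (B\<^sup>2 * V * (\<Prod>i\<in>UNIV. l2norm (F i))\<^sup>2)"
    using V by (simp only: ennreal_mult''[OF zero_le_power2] ennreal_mult''[OF V])
  finally show ?thesis
    unfolding V_def .
qed

theorem lemma2p2:
  fixes s C :: real
  assumes "CARD('k::finite) \<ge> 2" and "s > 0"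
  shows "\<exists>C'. \<forall>(j::nat) (\<mm>::real^('n::finite)^'k \<Rightarrow> complex) (F::'k \<Rightarrow> real^'n \<Rightarrow> complex).
      \<mm> \<in> borel_measurable lebesgue \<longrightarrow>
      (\<forall>\<xi>. cmod (\<mm> \<xi>) \<le> C * (1 + norm \<xi>) powr (- s)) \<longrightarrow>
      closure {\<xi>. \<mm> \<xi> \<noteq> 0} \<subseteq> annulus (2 ^ j) \<longrightarrow>
      (\<forall>i. schwartz (F i)) \<longrightarrow>
      (\<integral>\<^sup>+ x. ennreal ((cmod (multop \<mm> F x))\<^sup>2) \<partial>lebesgue)
        \<le> ennreal ((C' * 2 powr (- real j * (s - (real CARD('k) - 1) * real CARD('n) / 2))
                     * (\<Prod>i\<in>UNIV. l2norm (F i)))\<^sup>2)"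
proof -
  define u where "u = unit_ball_vol (real CARD('n))"
  define C' where "C' = \<bar>C\<bar> * 2 powr s * sqrt ((u * 2 ^ CARD('n)) ^ (CARD('k) - 1))"
  show ?thesis
  proof (intro exI[of _ C'] allI impI)
    fix j :: nat and m :: "real ^ 'n ^ 'k \<Rightarrow> complex" and F :: "'k \<Rightarrow> real ^ 'n \<Rightarrow> complex"
    assume m: "m \<in> borel_measurable lebesgue" "\<forall>\<xi>. cmod (m \<xi>) \<le> C * (1 + norm \<xi>) powr (- s)"
      "closure {\<xi>. m \<xi> \<noteq> 0} \<subseteq> annulus (2 ^ j)" and F: "\<forall>i. schwartz (F i)"
    have "(\<integral>\<^sup>+x. ennreal ((cmod (multop m F x))\<^sup>2) \<partial>lebesgue)
        \<le> ennreal ((\<bar>C\<bar> * (2 ^ j / 2) powr (- s))\<^sup>2 * (u * (2 * 2 ^ j) ^ CARD('n)) ^ (CARD('k) - 1)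
          * (\<Prod>i\<in>UNIV. l2norm (F i))\<^sup>2)"
      unfolding u_def using \<open>s > 0\<close> F multiplier_bounds_of_annulus[OF m(2)[rule_format] _ m(3)]
      by (intro nn_integral_cmod_sq_multop_schwartz_le m(1)) auto
    also have "(\<bar>C\<bar> * (2 ^ j / 2) powr (- s))\<^sup>2 * (u * (2 * 2 ^ j) ^ CARD('n)) ^ (CARD('k) - 1)
        = (C' * 2 powr (- real j * (s - (real CARD('k) - 1) * real CARD('n) / 2)))\<^sup>2"
      unfolding C'_def u_def using assms(1) by (intro dyadic_scaling_identity) simp_all
    finally show "(\<integral>\<^sup>+x. ennreal ((cmod (multop m F x))\<^sup>2) \<partial>lebesgue)
        \<le> ennreal ((C' * 2 powr (- real j * (s - (real CARD('k) - 1) * real CARD('n) / 2))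
          * (\<Prod>i\<in>UNIV. l2norm (F i)))\<^sup>2)"
      by (simp only: power_mult_distrib[of "C' * _" "\<Prod>i\<in>UNIV. l2norm (F i)"])
  qed
qed

end
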